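(* Let $1<p<\infty$ and $q=p/(p-1)$. Then for all $u,v\ge0$ and all $\beta\in(0,1)$, $$\min\left\{\frac1{\beta p},\frac1{(1-\beta)q}\right\}\left(\beta u^p+(1-\beta)v^q-u^{\beta p}v^{(1-\beta)q}\right)\le\frac{u^p}{p}+\frac{v^q}{q}-uv\le\max\left\{\frac1{\beta p},\frac1{(1-\beta)q}\right\}\left(\beta u^p+(1-\beta)v^q-u^{\beta p}v^{(1-\beta)q}\right).$$ *)

theory Defs
  imports Complex_Main
begin

end

theory Submission
  imports Defs "HOL-Analysis.Analysis"
begin

(* For weights t in (0,1) and a, b >= 0 consider the weighted
   AM-GM gap  G_t(a,b) = t a + (1-t) b - a^t b^(1-t) >= 0.  Young's deficit
   u^p/p + v^q/q - u v is G_(1/p)(u^p, v^q), and the bracket in the corollary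
   is G_beta(u^p, v^q).  So the corollary is a comparison of gaps at two
   weights l = 1/p and m = beta:
     min(l/m, (1-l)/(1-m)) G_m <= G_l <= max(l/m, (1-l)/(1-m)) G_m.
   For l <= m the lower bound (l/m) G_m <= G_l is weighted AM-GM applied once
   more, to the point a^m b^(1-m) and to b with weight l/m; the upper bound
   follows from the symmetry G_t(a,b) = G_(1-t)(b,a), and the case m < l is
   the swapped instance. *)

lemma weighted_am_gm:
  fixes x y w :: real
  assumes "0 \<le> x" "0 \<le> y" "0 \<le> w" "w \<le> 1"
  shows "x powr w * y powr (1 - w) \<le> w * x + (1 - w) * y"
proof (cases "x = 0 \<or> y = 0")
  case True
  then show ?thesis using assms by auto
next
  case False
  then show ?thesis using Youngs_inequality_0[of w "1 - w" x y] assms by auto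
qed

definition am_gm_gap :: "real \<Rightarrow> real \<Rightarrow> real \<Rightarrow> real" where
  "am_gm_gap t a b = t * a + (1 - t) * b - a powr t * b powr (1 - t)"

lemma am_gm_gap_nonneg:
  assumes "0 \<le> a" "0 \<le> b" "0 \<le> t" "t \<le> 1"
  shows "0 \<le> am_gm_gap t a b"
  using weighted_am_gm[OF assms] by (simp add: am_gm_gap_def)

lemma am_gm_gap_swap: "am_gm_gap t a b = am_gm_gap (1 - t) b a"
  by (simp add: am_gm_gap_def algebra_simps)

text \<open>Decreasing the weight from \<open>m\<close> to \<open>l\<close> keeps at least the fraction \<open>l/m\<close> of the gap:
  the geometric mean with weight \<open>l\<close> interpolates, with weight \<open>l/m\<close>, between the
  geometric mean with weight \<open>m\<close> and \<open>b\<close>.\<close>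

lemma am_gm_gap_lower:
  fixes l m a b :: real
  assumes "0 < l" "l \<le> m" "m < 1" "0 \<le> a" "0 \<le> b"
  shows "(l / m) * am_gm_gap m a b \<le> am_gm_gap l a b"
proof -
  have m_pos: "0 < m" using assms by linarith
  define g where "g = a powr m * b powr (1 - m)"
  have "g powr (l / m) * b powr (1 - l / m)
        = a powr l * (b powr ((1 - m) * (l / m)) * b powr (1 - l / m))"
    using m_pos by (simp add: g_def powr_mult powr_powr)
  also have "\<dots> = a powr l * b powr ((1 - m) * (l / m) + (1 - l / m))"
    by (simp add: powr_add)
  also have "(1 - m) * (l / m) + (1 - l / m) = 1 - l"
    using m_pos by (simp add: field_simps)
  finally have interpolate: "g powr (l / m) * b powr (1 - l / m) = a powr l * b powr (1 - l)" .
  have "a powr l * b powr (1 - l) \<le> (l / m) * g + (1 - l / m) * b"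
    using weighted_am_gm[of g b "l / m"] interpolate assms m_pos by (simp add: g_def)
  moreover have "(l / m) * am_gm_gap m a b = l * a + (l / m - l) * b - (l / m) * g"
    using m_pos by (simp add: am_gm_gap_def g_def field_simps)
  ultimately show ?thesis by (simp add: am_gm_gap_def algebra_simps)
qed

lemma am_gm_gap_upper:
  fixes l m a b :: real
  assumes "0 < l" "l \<le> m" "m < 1" "0 \<le> a" "0 \<le> b"
  shows "am_gm_gap l a b \<le> ((1 - l) / (1 - m)) * am_gm_gap m a b"
proof -
  have "((1 - m) / (1 - l)) * am_gm_gap (1 - l) b a \<le> am_gm_gap (1 - m) b a"
    using am_gm_gap_lower[of "1 - m" "1 - l" b a] assms by simp
  then have "((1 - m) / (1 - l)) * am_gm_gap l a b \<le> am_gm_gap m a b"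
    by (metis am_gm_gap_swap diff_diff_cancel)
  moreover have "0 < 1 - m" "0 < 1 - l" using assms by auto
  ultimately show ?thesis by (simp add: field_simps)
qed

lemma am_gm_gap_between_ratios:
  fixes l m a b :: real
  assumes "0 < l" "l < 1" "0 < m" "m < 1" "0 \<le> a" "0 \<le> b"
  obtains r s where "{r, s} = {l / m, (1 - l) / (1 - m)}"
    and "r * am_gm_gap m a b \<le> am_gm_gap l a b" "am_gm_gap l a b \<le> s * am_gm_gap m a b"
proof (cases "l \<le> m")
  case True
  then show ?thesis
    using that am_gm_gap_lower[of l m a b] am_gm_gap_upper[of l m a b] assms by blast
next
  case False
  have "(1 - l) / (1 - m) * am_gm_gap (1 - m) b a \<le> am_gm_gap (1 - l) b a"
       "am_gm_gap (1 - l) b a \<le> ((1 - (1 - l)) / (1 - (1 - m))) * am_gm_gap (1 - m) b a"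
    using assms False am_gm_gap_lower[of "1 - l" "1 - m" b a]
      am_gm_gap_upper[of "1 - l" "1 - m" b a] by auto
  then show ?thesis
    using that[of "(1 - l) / (1 - m)" "l / m"]
    by (simp add: am_gm_gap_swap[of m a b] am_gm_gap_swap[of l a b] insert_commute)
qed

theorem am_gm_gap_comparison:
  fixes l m a b :: real
  assumes "0 < l" "l < 1" "0 < m" "m < 1" "0 \<le> a" "0 \<le> b"
  shows "min (l / m) ((1 - l) / (1 - m)) * am_gm_gap m a b \<le> am_gm_gap l a b \<and>
         am_gm_gap l a b \<le> max (l / m) ((1 - l) / (1 - m)) * am_gm_gap m a b"
proof -
  have gap_nonneg: "0 \<le> am_gm_gap m a b"
    using am_gm_gap_nonneg assms by auto
  obtain r s where rs: "{r, s} = {l / m, (1 - l) / (1 - m)}"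
    and lower: "r * am_gm_gap m a b \<le> am_gm_gap l a b"
    and upper: "am_gm_gap l a b \<le> s * am_gm_gap m a b"
    using am_gm_gap_between_ratios[OF assms] by blast
  have "min (l / m) ((1 - l) / (1 - m)) \<le> r" "s \<le> max (l / m) ((1 - l) / (1 - m))"
    using rs by (auto simp: doubleton_eq_iff)
  then show ?thesis
    using lower upper mult_right_mono[OF _ gap_nonneg] by (meson order_trans)
qed

lemma conjugate_exponent:
  fixes p q :: real
  assumes "1 < p" "q = p / (p - 1)"
  shows "1 - 1 / p = 1 / q"
proof -
  have "1 / q = (p - 1) / p" using assms by simp
  then show ?thesis using assms(1) by (simp add: diff_divide_distrib)
qed

lemma young_deficit_eq_gap:
  fixes p q u v :: real
  assumes "1 < p" "q = p / (p - 1)" "0 \<le> u" "0 \<le> v"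
  shows "am_gm_gap (1 / p) (u powr p) (v powr q) = u powr p / p + v powr q / q - u * v"
proof -
  have conj: "1 - 1 / p = 1 / q" using conjugate_exponent assms by blast
  have "(u powr p) powr (1 / p) = u" "(v powr q) powr (1 / q) = v"
    using assms by (simp_all add: powr_powr)
  then show ?thesis by (simp add: am_gm_gap_def conj)
qed

lemma gap_at_powers:
  fixes p q u v \<beta> :: real
  shows "am_gm_gap \<beta> (u powr p) (v powr q)
         = \<beta> * u powr p + (1 - \<beta>) * v powr q - u powr (\<beta> * p) * v powr ((1 - \<beta>) * q)"
  by (simp add: am_gm_gap_def powr_powr mult.commute)

theorem corollary3p1:
  fixes p q u v \<beta> :: real
  assumes "1 < p" and "q = p / (p - 1)"
    and "0 \<le> u" and "0 \<le> v"
    and "0 < \<beta>" and "\<beta> < 1"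
  shows "min (1 / (\<beta> * p)) (1 / ((1 - \<beta>) * q)) *
           (\<beta> * u powr p + (1 - \<beta>) * v powr q - u powr (\<beta> * p) * v powr ((1 - \<beta>) * q))
         \<le> u powr p / p + v powr q / q - u * v \<and>
         u powr p / p + v powr q / q - u * v
         \<le> max (1 / (\<beta> * p)) (1 / ((1 - \<beta>) * q)) *
           (\<beta> * u powr p + (1 - \<beta>) * v powr q - u powr (\<beta> * p) * v powr ((1 - \<beta>) * q))"
proof -
  have ratio1: "(1 / p) / \<beta> = 1 / (\<beta> * p)" by simp
  have ratio2: "(1 - 1 / p) / (1 - \<beta>) = 1 / ((1 - \<beta>) * q)"
    using conjugate_exponent[OF assms(1,2)] by simp
  have "0 < 1 / p" "1 / p < 1" using assms(1) by auto
  then have "min ((1 / p) / \<beta>) ((1 - 1 / p) / (1 - \<beta>)) * am_gm_gap \<beta> (u powr p) (v powr q)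
               \<le> am_gm_gap (1 / p) (u powr p) (v powr q) \<and>
             am_gm_gap (1 / p) (u powr p) (v powr q)
               \<le> max ((1 / p) / \<beta>) ((1 - 1 / p) / (1 - \<beta>)) * am_gm_gap \<beta> (u powr p) (v powr q)"
    using am_gm_gap_comparison[of "1 / p" \<beta> "u powr p" "v powr q"] assms(5,6) by simp
  then show ?thesis
    unfolding ratio1 ratio2 young_deficit_eq_gap[OF assms(1-4)] unfolding gap_at_powers .
qed

end
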